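(* For all graphs $G$ and $H$: $G$ and $H$ are distinguishable by EB-1WL if and only if they are distinguishable by $\mathrm{CFOC}^3$, i.e. there is a $\mathrm{CFOC}^3$ sentence $\phi$ with $G\models\phi$ and $H\not\models\phi$.
   Context: All graphs are finite, simple and undirected, without isolated vertices; $N(v)$ denotes the neighborhood of $v$. An ordered edge of $G=(V,E)$ is a pair $(u,v)$ with $\{u,v\}\in E$. EB-1WL coloring: $\mathrm{eb}^{(0)}(G,(u,v))=1$ for every ordered edge, and $\mathrm{eb}^{(\ell+1)}(G,(u,v)) = \big(\mathrm{eb}^{(\ell)}(G,(u,v)),\ \{\!\{\mathrm{eb}^{(\ell)}(G,(u,x)) : x\in N(u)\}\!\},\ \{\!\{(\mathrm{eb}^{(\ell)}(G,(u,y)),\mathrm{eb}^{(\ell)}(G,(v,y))) : y\in N(u)\cap N(v)\}\!\},\ \{\!\{\mathrm{eb}^{(\ell)}(G,(v,z)) : z\in N(v)\}\!\}\big)$. $\mathrm{eb}^{(\ell)}(G)$ is the multiset of $\mathrm{eb}^{(\ell)}(G,(u,v))$ over all ordered edges. Graphs are distinguishable by EB-1WL if they have different numbers of vertices or there is $\ell$ with $\mathrm{eb}^{(\ell)}(G)\neq\mathrm{eb}^{(\ell)}(H)$. Logic: first-order logic over the vocabulary with one binary relation $E$, where $E(x,y)$ holds of $(u,v)$ iff $\{u,v\}$ is an edge. For a tuple $\bar x=(x_1,\dots,x_n)$ of distinct variables, $\mathrm{clique}(\bar x):=\bigwedge_{1\le i<j\le n}E(x_i,x_j)$ (empty conjunction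 = true). CFOC (clique-based first-order logic with counting) is the smallest set of formulas such that: (1) $\mathrm{clique}(\bar x)$ is in CFOC for any tuple of distinct variables; (2) if $\phi(\bar x)\in$ CFOC then $\mathrm{clique}(\bar x)\wedge\neg\phi(\bar x)\in$ CFOC; (3) if $\phi(\bar x),\psi(\bar y)\in$ CFOC then $\mathrm{clique}(\bar z)\wedge(\phi(\bar x)\star\psi(\bar y))\in$ CFOC for $\star\in\{\wedge,\vee\}$, where $\bar z$ lists each variable of $\bar x$ and $\bar y$ exactly once; (4) if $\phi(\bar x,y)\in$ CFOC then $\mathrm{clique}(\bar x)\wedge\exists^{\ge k}y\,\phi(\bar x,y)\in$ CFOC for every integer $k\ge1$, where $\exists^{\ge k}y\,\phi$ means there are at least $k$ vertices $v$ such that $\phi$ holds with $y=v$. Here $\phi(\bar x)$ means the free variables of $\phi$ are exactly those in $\bar x$. $\mathrm{CFOC}^3$ consists of the CFOC formulas using at most three distinct variables; a sentence is a formula with no free variables. *)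

theory Defs
  imports Main "HOL-Library.Multiset"
begin

definition simple_graph :: "'a set \<Rightarrow> ('a \<Rightarrow> 'a \<Rightarrow> bool) \<Rightarrow> bool" where
  "simple_graph V E \<longleftrightarrow> finite V
     \<and> (\<forall>u v. E u v \<longrightarrow> u \<in> V \<and> v \<in> V)
     \<and> (\<forall>u v. E u v \<longrightarrow> E v u)
     \<and> (\<forall>v. \<not> E v v)
     \<and> (\<forall>v\<in>V. \<exists>u. E v u)"

definition nbhd :: "('a \<Rightarrow> 'a \<Rightarrow> bool) \<Rightarrow> 'a \<Rightarrow> 'a set" where
  "nbhd E u = {x. E u x}"

datatype ebcol = EB0
  | EBS ebcol "ebcol multiset" "(ebcol \<times> ebcol) multiset" "ebcol multiset"

fun eb :: "nat \<Rightarrow> ('a \<Rightarrow> 'a \<Rightarrow> bool) \<Rightarrow> 'a \<Rightarrow> 'a \<Rightarrow> ebcol" where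
  "eb 0 E u v = EB0"
| "eb (Suc l) E u v =
     EBS (eb l E u v)
         (image_mset (\<lambda>x. eb l E u x) (mset_set (nbhd E u)))
         (image_mset (\<lambda>y. (eb l E u y, eb l E v y)) (mset_set (nbhd E u \<inter> nbhd E v)))
         (image_mset (\<lambda>z. eb l E v z) (mset_set (nbhd E v)))"

definition eb_colors :: "nat \<Rightarrow> ('a \<Rightarrow> 'a \<Rightarrow> bool) \<Rightarrow> ebcol multiset" where
  "eb_colors l E = image_mset (\<lambda>(u, v). eb l E u v) (mset_set {(u, v). E u v})"

definition eb_distinguishable ::
  "'a set \<Rightarrow> ('a \<Rightarrow> 'a \<Rightarrow> bool) \<Rightarrow> 'b set \<Rightarrow> ('b \<Rightarrow> 'b \<Rightarrow> bool) \<Rightarrow> bool" where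
  "eb_distinguishable V E W F \<longleftrightarrow> card V \<noteq> card W \<or> (\<exists>l. eb_colors l E \<noteq> eb_colors l F)"

text \<open>Each constructor
records the tuple of variables of the outer clique conjunct, which is also its
tuple of free variables:
  Clique xs          = clique(xs)
  CNeg xs p          = clique(xs) /\ ~p
  CConj zs p q       = clique(zs) /\ (p /\ q)
  CDisj zs p q       = clique(zs) /\ (p \/ q)
  CEx xs k y p       = clique(xs) /\ EX>=k y. p\<close>

type_synonym var = nat

datatype cfm = Clique "var list"
  | CNeg "var list" cfm
  | CConj "var list" cfm cfm
  | CDisj "var list" cfm cfm
  | CEx "var list" nat var cfm

text \<open>Free variables (as computed from the syntax of first-order logic; the
outer tuple lists exactly the free variables of well-formed formulas).\<close>
fun fv :: "cfm \<Rightarrow> var set" where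
  "fv (Clique xs) = set xs"
| "fv (CNeg xs p) = set xs \<union> fv p"
| "fv (CConj zs p q) = set zs \<union> fv p \<union> fv q"
| "fv (CDisj zs p q) = set zs \<union> fv p \<union> fv q"
| "fv (CEx xs k y p) = set xs \<union> (fv p - {y})"

fun vars :: "cfm \<Rightarrow> var set" where
  "vars (Clique xs) = set xs"
| "vars (CNeg xs p) = set xs \<union> vars p"
| "vars (CConj zs p q) = set zs \<union> vars p \<union> vars q"
| "vars (CDisj zs p q) = set zs \<union> vars p \<union> vars q"
| "vars (CEx xs k y p) = set xs \<union> {y} \<union> vars p"

inductive cfoc :: "cfm \<Rightarrow> bool" where
  clique: "distinct xs \<Longrightarrow> cfoc (Clique xs)"
| neg: "\<lbrakk>cfoc p; distinct xs; fv p = set xs\<rbrakk> \<Longrightarrow> cfoc (CNeg xs p)"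
| conj: "\<lbrakk>cfoc p; cfoc q; distinct zs; set zs = fv p \<union> fv q\<rbrakk> \<Longrightarrow> cfoc (CConj zs p q)"
| disj: "\<lbrakk>cfoc p; cfoc q; distinct zs; set zs = fv p \<union> fv q\<rbrakk> \<Longrightarrow> cfoc (CDisj zs p q)"
| ex: "\<lbrakk>cfoc p; distinct xs; y \<notin> set xs; fv p = insert y (set xs); k \<ge> 1\<rbrakk>
        \<Longrightarrow> cfoc (CEx xs k y p)"

definition clique_holds :: "('a \<Rightarrow> 'a \<Rightarrow> bool) \<Rightarrow> (var \<Rightarrow> 'a) \<Rightarrow> var list \<Rightarrow> bool" where
  "clique_holds E \<alpha> xs \<longleftrightarrow>
     (\<forall>i j. i < j \<and> j < length xs \<longrightarrow> E (\<alpha> (xs ! i)) (\<alpha> (xs ! j)))"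

fun sat :: "'a set \<Rightarrow> ('a \<Rightarrow> 'a \<Rightarrow> bool) \<Rightarrow> (var \<Rightarrow> 'a) \<Rightarrow> cfm \<Rightarrow> bool" where
  "sat V E \<alpha> (Clique xs) = clique_holds E \<alpha> xs"
| "sat V E \<alpha> (CNeg xs p) = (clique_holds E \<alpha> xs \<and> \<not> sat V E \<alpha> p)"
| "sat V E \<alpha> (CConj zs p q) = (clique_holds E \<alpha> zs \<and> (sat V E \<alpha> p \<and> sat V E \<alpha> q))"
| "sat V E \<alpha> (CDisj zs p q) = (clique_holds E \<alpha> zs \<and> (sat V E \<alpha> p \<or> sat V E \<alpha> q))"
| "sat V E \<alpha> (CEx xs k y p) =
     (clique_holds E \<alpha> xs \<and> k \<le> card {v \<in> V. sat V E (\<alpha>(y := v)) p})"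

text \<open>A sentence holds in a graph (its truth does not depend on the assignment).\<close>
definition models :: "'a set \<Rightarrow> ('a \<Rightarrow> 'a \<Rightarrow> bool) \<Rightarrow> cfm \<Rightarrow> bool" where
  "models V E p \<longleftrightarrow> (\<forall>\<alpha>. sat V E \<alpha> p)"

definition cfoc3_sentence :: "cfm \<Rightarrow> bool" where
  "cfoc3_sentence p \<longleftrightarrow> cfoc p \<and> card (vars p) \<le> 3 \<and> fv p = {}"

definition cfoc3_distinguishable ::
  "'a set \<Rightarrow> ('a \<Rightarrow> 'a \<Rightarrow> bool) \<Rightarrow> 'b set \<Rightarrow> ('b \<Rightarrow> 'b \<Rightarrow> bool) \<Rightarrow> bool" where
  "cfoc3_distinguishable V E W F \<longleftrightarrow>
     (\<exists>p. cfoc3_sentence p \<and> models V E p \<and> \<not> models W F p)"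

end

theory Submission
  imports Defs
begin

text \<open>
  Edge colours are definable in CFOC^3: by induction on the round, the colour of an
  ordered edge is expressed by a formula in two free variables whose third variable, guarded by
  a clique, counts exactly the neighbours of either endpoint and the common neighbours of both
  endpoints of each colour. Counting vertices, or vertices whose multiset of outgoing edge colours
  is a given one, turns any difference between the colour multisets into a distinguishing sentence.

  Conversely, if all colour multisets coincide, then so do the multisets of vertex colours, since
  no vertex is isolated. By induction on formulas, assignments of at most three variables that
  agree on adjacency, edge colours and vertex colours at round 2 \<cdot> (quantifier depth) satisfy the
  same formulas: the clique guard makes a quantified variable range over all vertices, over the
  neighbours of one vertex, or over the common neighbours of an edge, and these are matched colour
  by colour by the multiset of vertex colours, the vertex colour, or the triangle part of the edge
  colour.
\<close>

lemma count_image_mset_mset_set: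
  "finite S \<Longrightarrow> count (image_mset f (mset_set S)) a = card {x\<in>S. f x = a}"
  by (simp add: count_image_mset Int_commute vimage_def Collect_conj_eq)

lemma mset_eq_iff_counts_size:
  "M = A \<longleftrightarrow> (\<forall>a\<in>#A. count M a = count A a) \<and> size M = size A"
proof
  assume counts: "(\<forall>a\<in>#A. count M a = count A a) \<and> size M = size A"
  then have "A \<subseteq># M"
    by (metis count_inI le_refl mset_subset_eqI zero_le)
  then show "M = A"
    using counts
    by (metis Diff_eq_empty_iff_mset nonempty_has_size size_Diff_submset subset_mset.order_eq_iff)
qed simp

lemma image_mset_sum: "image_mset f (\<Sum>a\<in>A. M a) = (\<Sum>a\<in>A. image_mset f (M a))"
  by (induction A rule: infinite_finite_induct) auto

lemma image_mset_mset_set_Sigma: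
  assumes "finite A" "\<And>a. a \<in> A \<Longrightarrow> finite (B a)"
  shows "image_mset g (mset_set (Sigma A B)) = (\<Sum>a\<in>A. image_mset (\<lambda>b. g (a, b)) (mset_set (B a)))"
  using assms
proof (induction A rule: finite_induct)
  case (insert a A)
  have "Sigma (insert a A) B = Pair a ` B a \<union> Sigma A B"
    by auto
  moreover have "Pair a ` B a \<inter> Sigma A B = {}"
    using insert.hyps(2) by auto
  moreover have "mset_set (Pair a ` B a) = image_mset (Pair a) (mset_set (B a))"
    by (simp add: image_mset_mset_set inj_on_def)
  ultimately show ?case
    using insert by (simp add: mset_set_Union multiset.map_comp o_def)
qed simp

lemma card_eq_if_image_mset_eq:
  assumes "finite A" "finite B"
    and image_eq: "image_mset f (mset_set A) = image_mset g (mset_set B)"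
    and compatible: "\<And>a b. a \<in> A \<Longrightarrow> b \<in> B \<Longrightarrow> f a = g b \<Longrightarrow> P a \<longleftrightarrow> R b"
  shows "card {a\<in>A. P a} = card {b\<in>B. R b}"
proof -
  define Q where "Q c \<longleftrightarrow> (\<exists>b\<in>B. g b = c \<and> R b)" for c
  have P_Q: "P a \<longleftrightarrow> Q (f a)" if "a \<in> A" for a
  proof -
    have "f a \<in># image_mset g (mset_set B)"
      unfolding image_eq[symmetric] using that \<open>finite A\<close> by simp
    then obtain b where "b \<in> B" "g b = f a"
      using \<open>finite B\<close> by auto
    then show ?thesis
      using compatible[OF that] unfolding Q_def by metis
  qed
  have R_Q: "R b \<longleftrightarrow> Q (g b)" if "b \<in> B" for b
  proof -
    have "g b \<in># image_mset f (mset_set A)"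
      unfolding image_eq using that \<open>finite B\<close> by simp
    then obtain a where "a \<in> A" "f a = g b"
      using \<open>finite A\<close> by auto
    then show ?thesis
      using P_Q compatible that by metis
  qed
  have "card {a\<in>A. P a} = size (filter_mset P (mset_set A))"
    using \<open>finite A\<close> by simp
  also have "filter_mset P (mset_set A) = filter_mset (\<lambda>a. Q (f a)) (mset_set A)"
    using P_Q \<open>finite A\<close> by (intro filter_mset_cong) auto
  also have "size \<dots> = size (filter_mset Q (image_mset f (mset_set A)))"
    by (metis image_mset_filter_mset_swap size_image_mset)
  also have "\<dots> = size (filter_mset Q (image_mset g (mset_set B)))"
    by (simp only: image_eq)
  also have "\<dots> = size (filter_mset (\<lambda>b. Q (g b)) (mset_set B))"
    by (metis image_mset_filter_mset_swap size_image_mset)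
  also have "filter_mset (\<lambda>b. Q (g b)) (mset_set B) = filter_mset R (mset_set B)"
    using R_Q \<open>finite B\<close> by (intro filter_mset_cong) auto
  also have "size \<dots> = card {b\<in>B. R b}"
    using \<open>finite B\<close> by simp
  finally show ?thesis .
qed

lemma simple_graph_finite: "simple_graph V E \<Longrightarrow> finite V"
  by (simp add: simple_graph_def)

lemma simple_graph_edge_in: "simple_graph V E \<Longrightarrow> E u v \<Longrightarrow> u \<in> V \<and> v \<in> V"
  by (simp add: simple_graph_def)

lemma simple_graph_sym: "simple_graph V E \<Longrightarrow> E u v \<Longrightarrow> E v u"
  by (simp add: simple_graph_def)

lemma simple_graph_nbhd_subset: "simple_graph V E \<Longrightarrow> nbhd E u \<subseteq> V"
  by (auto simp: nbhd_def simple_graph_def)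

lemma simple_graph_finite_nbhd: "simple_graph V E \<Longrightarrow> finite (nbhd E u)"
  by (meson finite_subset simple_graph_finite simple_graph_nbhd_subset)

lemma simple_graph_nbhd_nonempty: "simple_graph V E \<Longrightarrow> u \<in> V \<Longrightarrow> nbhd E u \<noteq> {}"
  by (auto simp: nbhd_def simple_graph_def)

section \<open>Colour refinement on edges\<close>

definition eb_vertex_color :: "nat \<Rightarrow> ('a \<Rightarrow> 'a \<Rightarrow> bool) \<Rightarrow> 'a \<Rightarrow> ebcol multiset" where
  "eb_vertex_color l E u = image_mset (eb l E u) (mset_set (nbhd E u))"

definition eb_triangle_colors ::
  "nat \<Rightarrow> ('a \<Rightarrow> 'a \<Rightarrow> bool) \<Rightarrow> 'a \<Rightarrow> 'a \<Rightarrow> (ebcol \<times> ebcol) multiset" where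
  "eb_triangle_colors l E u v =
     image_mset (\<lambda>y. (eb l E u y, eb l E v y)) (mset_set (nbhd E u \<inter> nbhd E v))"

lemma eb_Suc:
  "eb (Suc l) E u v =
     EBS (eb l E u v) (eb_vertex_color l E u) (eb_triangle_colors l E u v) (eb_vertex_color l E v)"
  by (simp add: eb_vertex_color_def eb_triangle_colors_def)

declare eb.simps(2) [simp del]

lemma eb_Suc_eq_iff:
  "eb (Suc l) E u v = eb (Suc l) F u' v' \<longleftrightarrow>
     eb l E u v = eb l F u' v' \<and> eb_vertex_color l E u = eb_vertex_color l F u'
     \<and> eb_triangle_colors l E u v = eb_triangle_colors l F u' v'
     \<and> eb_vertex_color l E v = eb_vertex_color l F v'"
  by (simp add: eb_Suc)

fun ebcol_swap :: "ebcol \<Rightarrow> ebcol" where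
  "ebcol_swap EB0 = EB0"
| "ebcol_swap (EBS c A T B) = EBS (ebcol_swap c) B (image_mset prod.swap T) A"

lemma eb_swap: "eb l E v u = ebcol_swap (eb l E u v)"
proof (induction l)
  case (Suc l)
  have "eb_triangle_colors l E v u = image_mset prod.swap (eb_triangle_colors l E u v)"
    by (simp add: eb_triangle_colors_def multiset.map_comp o_def Int_commute)
  with Suc show ?case
    by (simp add: eb_Suc)
qed simp

lemma eb_eq_swap: "eb l E u v = eb l F u' v' \<Longrightarrow> eb l E v u = eb l F v' u'"
  by (simp add: eb_swap[of l E v] eb_swap[of l F v'])

fun ebcol_prev :: "ebcol \<Rightarrow> ebcol" where
  "ebcol_prev EB0 = EB0"
| "ebcol_prev (EBS c A T B) = c"

lemma image_mset_ebcol_prev_eb_vertex_color: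
  "image_mset ebcol_prev (eb_vertex_color (Suc l) E u) = eb_vertex_color l E u"
  by (simp add: eb_vertex_color_def multiset.map_comp o_def eb_Suc)

lemma eb_vertex_color_eq_Suc_imp:
  "eb_vertex_color (Suc l) E u = eb_vertex_color (Suc l) F u' \<Longrightarrow>
     eb_vertex_color l E u = eb_vertex_color l F u'"
  by (metis image_mset_ebcol_prev_eb_vertex_color)

definition eb_vertex_colors :: "nat \<Rightarrow> 'a set \<Rightarrow> ('a \<Rightarrow> 'a \<Rightarrow> bool) \<Rightarrow> ebcol multiset multiset" where
  "eb_vertex_colors l V E = image_mset (eb_vertex_color l E) (mset_set V)"

lemma eb_colors_eq_sum:
  assumes "simple_graph V E"
  shows "eb_colors l E = (\<Sum>u\<in>V. eb_vertex_color l E u)"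
proof -
  have "{(u, v). E u v} = Sigma V (nbhd E)"
    using simple_graph_edge_in[OF assms] by (auto simp: nbhd_def)
  then show ?thesis
    using assms unfolding eb_colors_def
    by (simp add: image_mset_mset_set_Sigma simple_graph_finite simple_graph_finite_nbhd
        eb_vertex_color_def)
qed

lemma eb_colors_eq_sum_vertex_colors:
  "simple_graph V E \<Longrightarrow> eb_colors l E = \<Sum>\<^sub># (eb_vertex_colors l V E)"
  by (simp add: eb_colors_eq_sum eb_vertex_colors_def sum_unfold_sum_mset)

fun ebcol_src :: "ebcol \<Rightarrow> ebcol multiset" where
  "ebcol_src EB0 = {#}"
| "ebcol_src (EBS c A T B) = A"

lemma count_src_eb_colors:
  assumes "simple_graph V E"
  shows "count (image_mset ebcol_src (eb_colors (Suc l) E)) M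
    = count (eb_vertex_colors l V E) M * size M"
proof -
  have src: "image_mset ebcol_src (eb_vertex_color (Suc l) E u)
      = replicate_mset (size (eb_vertex_color l E u)) (eb_vertex_color l E u)" for u
    by (simp add: eb_vertex_color_def[of "Suc l"] multiset.map_comp o_def eb_Suc
        image_mset_const_eq) (simp add: eb_vertex_color_def)
  have "count (image_mset ebcol_src (eb_colors (Suc l) E)) M
      = (\<Sum>u\<in>V. if eb_vertex_color l E u = M then size M else 0)"
    by (auto simp: eb_colors_eq_sum[OF assms] image_mset_sum count_sum src intro!: sum.cong)
  also have "\<dots> = card {u\<in>V. eb_vertex_color l E u = M} * size M"
    using simple_graph_finite[OF assms] by (simp add: sum.If_cases Int_def)
  also have "card {u\<in>V. eb_vertex_color l E u = M} = count (eb_vertex_colors l V E) M"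
    by (simp add: eb_vertex_colors_def count_image_mset_mset_set simple_graph_finite[OF assms])
  finally show ?thesis .
qed

text \<open>Isolated vertices would be invisible to the edge colours; without them every vertex
  colour is nonempty and hence recovered from its multiplicity among the edges.\<close>

lemma count_empty_eb_vertex_colors:
  "simple_graph V E \<Longrightarrow> count (eb_vertex_colors l V E) {#} = 0"
  by (simp add: eb_vertex_colors_def count_image_mset_mset_set simple_graph_finite
      eb_vertex_color_def mset_set_empty_iff simple_graph_finite_nbhd simple_graph_nbhd_nonempty)

lemma eb_vertex_colors_eq_if_eb_colors_eq:
  assumes "simple_graph V E" "simple_graph W F"
    and "eb_colors (Suc l) E = eb_colors (Suc l) F"
  shows "eb_vertex_colors l V E = eb_vertex_colors l W F"
proof (rule multiset_eqI)
  fix M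
  show "count (eb_vertex_colors l V E) M = count (eb_vertex_colors l W F) M"
  proof (cases "M = {#}")
    case False
    then show ?thesis
      using count_src_eb_colors[OF assms(1), of l M] count_src_eb_colors[OF assms(2), of l M]
        assms(3) by simp
  qed (simp add: count_empty_eb_vertex_colors assms)
qed

section \<open>Defining the colours in CFOC^3\<close>

lemma clique_holds_Nil [simp]: "clique_holds E \<alpha> []"
  by (simp add: clique_holds_def)

lemma clique_holds_Cons [simp]:
  "clique_holds E \<alpha> (x # xs) \<longleftrightarrow> (\<forall>y\<in>set xs. E (\<alpha> x) (\<alpha> y)) \<and> clique_holds E \<alpha> xs"
  unfolding clique_holds_def
proof safe
  fix y
  assume H: "\<forall>i j. i < j \<and> j < length (x # xs) \<longrightarrow> E (\<alpha> ((x # xs) ! i)) (\<alpha> ((x # xs) ! j))"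
    and "y \<in> set xs"
  then obtain j where "j < length xs" "y = xs ! j"
    by (auto simp: in_set_conv_nth)
  then show "E (\<alpha> x) (\<alpha> y)"
    using H[rule_format, of 0 "Suc j"] by simp
next
  fix i j
  assume "\<forall>i j. i < j \<and> j < length (x # xs) \<longrightarrow> E (\<alpha> ((x # xs) ! i)) (\<alpha> ((x # xs) ! j))"
    and "i < j" "j < length xs"
  then show "E (\<alpha> (xs ! i)) (\<alpha> (xs ! j))"
    by (metis Suc_less_eq length_Cons nth_Cons_Suc)
next
  fix i j
  assume "\<forall>y\<in>set xs. E (\<alpha> x) (\<alpha> y)"
    and "\<forall>i j. i < j \<and> j < length xs \<longrightarrow> E (\<alpha> (xs ! i)) (\<alpha> (xs ! j))"
    and "i < j" "j < length (x # xs)"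
  then show "E (\<alpha> ((x # xs) ! i)) (\<alpha> ((x # xs) ! j))"
    by (cases i; cases j) auto
qed

lemma finite_vars [simp]: "finite (vars p)"
  by (induction p) auto

lemma fv_subset_vars: "fv p \<subseteq> vars p"
  by (induction p) auto

fun conj_fm :: "var list \<Rightarrow> cfm list \<Rightarrow> cfm" where
  "conj_fm zs [] = Clique zs"
| "conj_fm zs (p # ps) = CConj zs p (conj_fm zs ps)"

lemma conj_fm_wf:
  assumes "distinct zs" "\<forall>p\<in>set ps. cfoc p \<and> fv p \<subseteq> set zs"
  shows "cfoc (conj_fm zs ps) \<and> fv (conj_fm zs ps) = set zs"
  using assms(2) by (induction ps) (auto intro!: cfoc.intros assms(1))

lemma vars_conj_fm [simp]: "vars (conj_fm zs ps) = set zs \<union> \<Union>(vars ` set ps)"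
  by (induction ps) auto

lemma sat_conj_fm [simp]:
  "sat V E \<alpha> (conj_fm zs ps) \<longleftrightarrow> clique_holds E \<alpha> zs \<and> (\<forall>p\<in>set ps. sat V E \<alpha> p)"
  by (induction ps) auto

definition exactly_fm :: "var list \<Rightarrow> nat \<Rightarrow> var \<Rightarrow> cfm \<Rightarrow> cfm" where
  "exactly_fm zs n y p =
     CConj zs (if n = 0 then Clique zs else CEx zs n y p) (CNeg zs (CEx zs (Suc n) y p))"

lemma exactly_fm_wf:
  assumes "cfoc p" "distinct zs" "y \<notin> set zs" "fv p = insert y (set zs)"
  shows "cfoc (exactly_fm zs n y p) \<and> fv (exactly_fm zs n y p) = set zs"
  using assms by (auto simp: exactly_fm_def intro!: cfoc.intros)

lemma vars_exactly_fm [simp]: "vars (exactly_fm zs n y p) = insert y (set zs \<union> vars p)"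
  by (auto simp: exactly_fm_def)

lemma sat_exactly_fm [simp]:
  "sat V E \<alpha> (exactly_fm zs n y p) \<longleftrightarrow>
     clique_holds E \<alpha> zs \<and> card {v\<in>V. sat V E (\<alpha>(y := v)) p} = n"
  by (auto simp: exactly_fm_def)

definition elements :: "'c multiset \<Rightarrow> 'c list" where
  "elements A = (SOME xs. set xs = set_mset A)"

lemma set_elements [simp]: "set (elements A) = set_mset A"
  unfolding elements_def by (rule someI_ex) (simp add: finite_list)

definition witness_mset_fm :: "var list \<Rightarrow> var \<Rightarrow> ('c \<Rightarrow> cfm) \<Rightarrow> 'c multiset \<Rightarrow> cfm" where
  "witness_mset_fm zs k g A = conj_fm zs
     (exactly_fm zs (size A) k (Clique (zs @ [k]))
      # map (\<lambda>a. exactly_fm zs (count A a) k (g a)) (elements A))"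

lemma witness_mset_fm_wf:
  assumes "distinct zs" "k \<notin> set zs"
    and "\<And>a. cfoc (g a) \<and> fv (g a) = insert k (set zs) \<and> vars (g a) \<subseteq> X"
  shows "cfoc (witness_mset_fm zs k g A) \<and> fv (witness_mset_fm zs k g A) = set zs
    \<and> vars (witness_mset_fm zs k g A) \<subseteq> insert k (set zs \<union> X)"
proof -
  define ps where "ps = exactly_fm zs (size A) k (Clique (zs @ [k]))
      # map (\<lambda>a. exactly_fm zs (count A a) k (g a)) (elements A)"
  have "cfoc (Clique (zs @ [k]))"
    using assms(1,2) by (auto intro: cfoc.intros)
  then have "\<forall>p\<in>set ps. cfoc p \<and> fv p \<subseteq> set zs"
    using exactly_fm_wf assms unfolding ps_def by auto
  then have "cfoc (conj_fm zs ps) \<and> fv (conj_fm zs ps) = set zs"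
    by (rule conj_fm_wf[OF assms(1)])
  moreover have "vars (conj_fm zs ps) \<subseteq> insert k (set zs \<union> X)"
    using assms(3) unfolding ps_def by auto
  ultimately show ?thesis
    unfolding witness_mset_fm_def ps_def by blast
qed

lemma sat_witness_mset_fm:
  assumes "finite S" "S \<subseteq> V"
    and "\<And>v. v \<in> V \<Longrightarrow> sat V E (\<alpha>(k := v)) (Clique (zs @ [k])) \<longleftrightarrow> v \<in> S"
    and "\<And>a v. v \<in> V \<Longrightarrow> sat V E (\<alpha>(k := v)) (g a) \<longleftrightarrow> v \<in> S \<and> h v = a"
  shows "sat V E \<alpha> (witness_mset_fm zs k g A) \<longleftrightarrow>
    clique_holds E \<alpha> zs \<and> image_mset h (mset_set S) = A"
proof -
  have "{v\<in>V. sat V E (\<alpha>(k := v)) (Clique (zs @ [k]))} = S"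
    using assms(2,3) by auto
  then have size_eq: "card {v\<in>V. sat V E (\<alpha>(k := v)) (Clique (zs @ [k]))}
      = size (image_mset h (mset_set S))"
    by simp
  have "{v\<in>V. sat V E (\<alpha>(k := v)) (g a)} = {v\<in>S. h v = a}" for a
    using assms(2,4) by auto
  then have count_eq: "card {v\<in>V. sat V E (\<alpha>(k := v)) (g a)}
      = count (image_mset h (mset_set S)) a" for a
    by (simp add: count_image_mset_mset_set[OF assms(1)])
  show ?thesis
    unfolding mset_eq_iff_counts_size[of "image_mset h (mset_set S)"]
    by (auto simp: witness_mset_fm_def size_eq count_eq simp del: sat.simps conj_fm.simps)
qed

fun eb_fm :: "nat \<Rightarrow> ebcol \<Rightarrow> var \<Rightarrow> var \<Rightarrow> var \<Rightarrow> cfm" where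
  "eb_fm 0 c i j k = (if c = EB0 then Clique [i, j] else CNeg [i, j] (Clique [i, j]))"
| "eb_fm (Suc l) EB0 i j k = CNeg [i, j] (Clique [i, j])"
| "eb_fm (Suc l) (EBS c A T B) i j k = conj_fm [i, j]
     [eb_fm l c i j k,
      witness_mset_fm [i] k (\<lambda>a. eb_fm l a i k j) A,
      witness_mset_fm [i, j] k (\<lambda>(a, b). CConj [i, j, k] (eb_fm l a i k j) (eb_fm l b j k i)) T,
      witness_mset_fm [j] k (\<lambda>b. eb_fm l b j k i) B]"

lemma eb_fm_wf:
  "distinct [i, j, k] \<Longrightarrow>
     cfoc (eb_fm l c i j k) \<and> fv (eb_fm l c i j k) = {i, j} \<and> vars (eb_fm l c i j k) \<subseteq> {i, j, k}"
proof (induction l c i j k rule: eb_fm.induct)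
  case (3 l c A T B i j k)
  let ?out_i = "\<lambda>a. eb_fm l a i k j" and ?out_j = "\<lambda>b. eb_fm l b j k i"
    and ?tri = "\<lambda>(a, b). CConj [i, j, k] (eb_fm l a i k j) (eb_fm l b j k i)"
  have ih_i: "cfoc (?out_i a) \<and> fv (?out_i a) = insert k (set [i]) \<and> vars (?out_i a) \<subseteq> {i, j, k}"
    for a
    using "3.IH"(2)[of a] "3.prems" by (auto simp: insert_commute)
  have ih_j: "cfoc (?out_j b) \<and> fv (?out_j b) = insert k (set [j]) \<and> vars (?out_j b) \<subseteq> {i, j, k}"
    for b
    using "3.IH"(5)[of b] "3.prems" by (auto simp: insert_commute)
  have ih_tri: "cfoc (?tri ab) \<and> fv (?tri ab) = insert k (set [i, j]) \<and> vars (?tri ab) \<subseteq> {i, j, k}"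
    for ab
    using ih_i ih_j "3.prems" by (cases ab) (auto intro!: cfoc.intros)
  have "\<forall>p\<in>set [eb_fm l c i j k, witness_mset_fm [i] k ?out_i A, witness_mset_fm [i, j] k ?tri T,
      witness_mset_fm [j] k ?out_j B]. cfoc p \<and> fv p \<subseteq> {i, j} \<and> vars p \<subseteq> {i, j, k}"
    using witness_mset_fm_wf[of "[i]" k ?out_i "{i, j, k}" A, OF _ _ ih_i]
      witness_mset_fm_wf[of "[j]" k ?out_j "{i, j, k}" B, OF _ _ ih_j]
      witness_mset_fm_wf[of "[i, j]" k ?tri "{i, j, k}" T, OF _ _ ih_tri] "3.IH"(1) "3.prems"
    by auto
  then show ?case
    using conj_fm_wf[of "[i, j]"] "3.prems" by (auto simp del: conj_fm.simps)
qed (auto intro!: cfoc.intros)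

lemma sat_eb_fm:
  assumes "simple_graph V E"
  shows "distinct [i, j, k] \<Longrightarrow>
    sat V E \<alpha> (eb_fm l c i j k) \<longleftrightarrow> E (\<alpha> i) (\<alpha> j) \<and> eb l E (\<alpha> i) (\<alpha> j) = c"
proof (induction l c i j k arbitrary: \<alpha> rule: eb_fm.induct)
  case (2 l i j k)
  then show ?case
    by (simp add: eb_Suc)
next
  case (3 l c A T B i j k)
  let ?out_i = "\<lambda>a. eb_fm l a i k j" and ?out_j = "\<lambda>b. eb_fm l b j k i"
    and ?tri = "\<lambda>(a, b). CConj [i, j, k] (eb_fm l a i k j) (eb_fm l b j k i)"
  show ?case
  proof (cases "E (\<alpha> i) (\<alpha> j)")
    case True
    have nbhd: "finite (nbhd E u)" "nbhd E u \<subseteq> V" for u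
      using assms by (simp_all add: simple_graph_nbhd_subset simple_graph_finite_nbhd)
    have ih_i: "sat V E (\<alpha>(k := v)) (?out_i a) \<longleftrightarrow> v \<in> nbhd E (\<alpha> i) \<and> eb l E (\<alpha> i) v = a"
      for a v
      using "3.IH"(2)[of "\<alpha>(k := v)" a] "3.prems" by (simp add: nbhd_def fun_upd_def)
    have ih_j: "sat V E (\<alpha>(k := v)) (?out_j b) \<longleftrightarrow> v \<in> nbhd E (\<alpha> j) \<and> eb l E (\<alpha> j) v = b"
      for b v
      using "3.IH"(5)[of "\<alpha>(k := v)" b] "3.prems" by (simp add: nbhd_def fun_upd_def)
    have "sat V E \<alpha> (eb_fm l c i j k) \<longleftrightarrow> eb l E (\<alpha> i) (\<alpha> j) = c"
      using "3.IH"(1) "3.prems" True by simp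
    moreover have "sat V E \<alpha> (witness_mset_fm [i] k ?out_i A) \<longleftrightarrow> eb_vertex_color l E (\<alpha> i) = A"
      unfolding eb_vertex_color_def
      by (rule sat_witness_mset_fm[OF nbhd, THEN trans])
        (use ih_i "3.prems" in \<open>auto simp: nbhd_def\<close>)
    moreover have "sat V E \<alpha> (witness_mset_fm [j] k ?out_j B) \<longleftrightarrow> eb_vertex_color l E (\<alpha> j) = B"
      unfolding eb_vertex_color_def
      by (rule sat_witness_mset_fm[OF nbhd, THEN trans])
        (use ih_j "3.prems" in \<open>auto simp: nbhd_def\<close>)
    moreover have "sat V E \<alpha> (witness_mset_fm [i, j] k ?tri T)
        \<longleftrightarrow> eb_triangle_colors l E (\<alpha> i) (\<alpha> j) = T"
      unfolding eb_triangle_colors_def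
      by (rule sat_witness_mset_fm[THEN trans])
        (use ih_i ih_j "3.prems" True nbhd simple_graph_edge_in[OF assms]
          in \<open>auto simp: nbhd_def split: prod.split\<close>)
    ultimately show ?thesis
      using True by (simp add: eb_Suc del: conj_fm.simps)
  qed simp
qed simp

lemma cfoc3_distinguishable_if_counts_differ:
  fixes Q :: "nat \<Rightarrow> cfm" and a b :: nat
  assumes "\<And>n. n \<ge> 1 \<Longrightarrow> cfoc3_sentence (Q n)"
    and "\<And>\<alpha> n. sat V E \<alpha> (Q n) \<longleftrightarrow> n \<le> a" "\<And>\<alpha> n. sat W F \<alpha> (Q n) \<longleftrightarrow> n \<le> b" "a \<noteq> b"
  shows "cfoc3_distinguishable V E W F"
proof (cases "b < a")
  case True
  then have "cfoc3_sentence (Q a)" "models V E (Q a)" "\<not> models W F (Q a)"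
    using assms(1-3) by (auto simp: models_def)
  then show ?thesis
    unfolding cfoc3_distinguishable_def by blast
next
  case False
  then have "cfoc3_sentence (CNeg [] (Q b))" "models V E (CNeg [] (Q b))"
    "\<not> models W F (CNeg [] (Q b))"
    using assms by (auto simp: cfoc3_sentence_def models_def intro!: cfoc.intros)
  then show ?thesis
    unfolding cfoc3_distinguishable_def by blast
qed

definition vertex_count_fm :: "nat \<Rightarrow> cfm" where
  "vertex_count_fm n = CEx [] n 0 (Clique [0])"

lemma cfoc3_sentence_vertex_count_fm: "n \<ge> 1 \<Longrightarrow> cfoc3_sentence (vertex_count_fm n)"
  by (auto simp: vertex_count_fm_def cfoc3_sentence_def intro!: cfoc.intros)

lemma sat_vertex_count_fm: "sat V E \<alpha> (vertex_count_fm n) \<longleftrightarrow> n \<le> card V"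
  by (simp add: vertex_count_fm_def)

definition vertex_color_count_fm :: "nat \<Rightarrow> ebcol multiset \<Rightarrow> nat \<Rightarrow> cfm" where
  "vertex_color_count_fm l M n = CEx [] n 0 (witness_mset_fm [0] 1 (\<lambda>a. eb_fm l a 0 1 2) M)"

lemma cfoc3_sentence_vertex_color_count_fm:
  assumes "n \<ge> 1"
  shows "cfoc3_sentence (vertex_color_count_fm l M n)"
proof -
  have "cfoc (witness_mset_fm [0] 1 (\<lambda>a. eb_fm l a 0 1 2) M)
      \<and> fv (witness_mset_fm [0] 1 (\<lambda>a. eb_fm l a 0 1 2) M) = {0}
      \<and> vars (witness_mset_fm [0] 1 (\<lambda>a. eb_fm l a 0 1 2) M) \<subseteq> {0, 1, 2}"
    using witness_mset_fm_wf[of "[0]" 1 "\<lambda>a. eb_fm l a 0 1 2" "{0, 1, 2}" M] eb_fm_wf[of 0 1 2 l]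
    by auto
  moreover have "card {0::nat, 1, 2} = 3"
    by simp
  ultimately show ?thesis
    using assms card_mono[of "{0::nat, 1, 2}" "vars (vertex_color_count_fm l M n)"]
    by (auto simp: vertex_color_count_fm_def cfoc3_sentence_def intro!: cfoc.intros)
qed

lemma sat_vertex_color_count_fm:
  assumes "simple_graph V E"
  shows "sat V E \<alpha> (vertex_color_count_fm l M n) \<longleftrightarrow> n \<le> count (eb_vertex_colors l V E) M"
proof -
  have "sat V E (\<alpha>(0 := u)) (witness_mset_fm [0] 1 (\<lambda>a. eb_fm l a 0 1 2) M)
      \<longleftrightarrow> eb_vertex_color l E u = M" for u
    unfolding eb_vertex_color_def
    using sat_eb_fm[OF assms, of 0 1 2] simple_graph_edge_in[OF assms]
      simple_graph_finite_nbhd[OF assms, unfolded nbhd_def]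
    by (intro sat_witness_mset_fm[THEN trans]) (auto simp: nbhd_def)
  then show ?thesis
    using simple_graph_finite[OF assms]
    by (simp add: vertex_color_count_fm_def eb_vertex_colors_def count_image_mset_mset_set)
qed

lemma cfoc3_distinguishable_if_eb_distinguishable:
  assumes "simple_graph V E" "simple_graph W F" "eb_distinguishable V E W F"
  shows "cfoc3_distinguishable V E W F"
proof -
  consider "card V \<noteq> card W" | l where "eb_colors l E \<noteq> eb_colors l F"
    using assms(3) unfolding eb_distinguishable_def by blast
  then show ?thesis
  proof cases
    case 1
    then show ?thesis
      by (intro cfoc3_distinguishable_if_counts_differ[where Q = vertex_count_fm
            and a = "card V" and b = "card W"])
        (simp_all add: cfoc3_sentence_vertex_count_fm sat_vertex_count_fm)
  next
    case (2 l)
    then obtain M where "count (eb_vertex_colors l V E) M \<noteq> count (eb_vertex_colors l W F) M"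
      using eb_colors_eq_sum_vertex_colors[OF assms(1)] eb_colors_eq_sum_vertex_colors[OF assms(2)]
      by (metis multiset_eqI)
    then show ?thesis
      by (intro cfoc3_distinguishable_if_counts_differ[where Q = "vertex_color_count_fm l M"
            and a = "count (eb_vertex_colors l V E) M" and b = "count (eb_vertex_colors l W F) M"])
        (simp_all add: cfoc3_sentence_vertex_color_count_fm sat_vertex_color_count_fm assms)
  qed
qed

section \<open>Invariance of CFOC^3 under colour equivalence\<close>

lemma clique_holds_edge:
  "clique_holds E \<alpha> xs \<Longrightarrow> x \<in> set xs \<Longrightarrow> y \<in> set xs \<Longrightarrow> x \<noteq> y \<Longrightarrow>
     E (\<alpha> x) (\<alpha> y) \<or> E (\<alpha> y) (\<alpha> x)"
  by (induction xs) auto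

lemma sat_imp_edge:
  assumes "simple_graph V E" "cfoc p" "sat V E \<alpha> p" "x \<in> fv p" "y \<in> fv p" "x \<noteq> y"
  shows "E (\<alpha> x) (\<alpha> y)"
proof -
  have "E (\<alpha> x) (\<alpha> y) \<or> E (\<alpha> y) (\<alpha> x)"
    using assms(2-) by (cases rule: cfoc.cases) (auto dest: clique_holds_edge)
  then show ?thesis
    using simple_graph_sym[OF assms(1)] by blast
qed

definition eb_agree ::
  "nat \<Rightarrow> ('a \<Rightarrow> 'a \<Rightarrow> bool) \<Rightarrow> ('b \<Rightarrow> 'b \<Rightarrow> bool) \<Rightarrow> (var \<Rightarrow> 'a) \<Rightarrow> (var \<Rightarrow> 'b) \<Rightarrow> var set \<Rightarrow> bool"
  where
  "eb_agree l E F \<alpha> \<beta> S \<longleftrightarrow>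
     (\<forall>x\<in>S. eb_vertex_color l E (\<alpha> x) = eb_vertex_color l F (\<beta> x)) \<and>
     (\<forall>x\<in>S. \<forall>y\<in>S. x \<noteq> y \<longrightarrow> (E (\<alpha> x) (\<alpha> y) \<longleftrightarrow> F (\<beta> x) (\<beta> y))
        \<and> (E (\<alpha> x) (\<alpha> y) \<longrightarrow> eb l E (\<alpha> x) (\<alpha> y) = eb l F (\<beta> x) (\<beta> y)))"

lemma eb_agree_subset: "eb_agree l E F \<alpha> \<beta> S \<Longrightarrow> S' \<subseteq> S \<Longrightarrow> eb_agree l E F \<alpha> \<beta> S'"
  unfolding eb_agree_def by blast

lemma eb_agree_clique_holds:
  "eb_agree l E F \<alpha> \<beta> (set xs) \<Longrightarrow> distinct xs \<Longrightarrow> clique_holds E \<alpha> xs \<longleftrightarrow> clique_holds F \<beta> xs"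
proof (induction xs)
  case (Cons x xs)
  then have "eb_agree l E F \<alpha> \<beta> (set xs)"
    by (auto elim: eb_agree_subset)
  with Cons show ?case
    unfolding eb_agree_def by auto
qed simp

lemma eb_agree_edge:
  assumes "simple_graph V E" "simple_graph W F" "x \<noteq> y" "E (\<alpha> x) (\<alpha> y)" "F (\<beta> x) (\<beta> y)"
    and "eb (Suc l) E (\<alpha> x) (\<alpha> y) = eb (Suc l) F (\<beta> x) (\<beta> y)"
  shows "eb_agree l E F \<alpha> \<beta> {x, y}"
  using assms eb_eq_swap[of l E "\<alpha> x" "\<alpha> y" F "\<beta> x" "\<beta> y"]
  by (auto simp: eb_agree_def eb_Suc_eq_iff dest: simple_graph_sym)

lemma eb_agree_triangle:
  "eb_agree l E F \<alpha> \<beta> {x, y} \<Longrightarrow> eb_agree l E F \<alpha> \<beta> {x, z} \<Longrightarrow> eb_agree l E F \<alpha> \<beta> {y, z} \<Longrightarrow>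
     eb_agree l E F \<alpha> \<beta> {x, y, z}"
  unfolding eb_agree_def by blast

lemma card_sat_upd_eq_unguarded:
  assumes "simple_graph V E" "simple_graph W F"
    and "eb_vertex_colors m V E = eb_vertex_colors m W F" "fv p = {y}"
    and IH: "\<And>\<alpha>' \<beta>'. eb_agree m E F \<alpha>' \<beta>' (fv p) \<Longrightarrow> sat V E \<alpha>' p \<longleftrightarrow> sat W F \<beta>' p"
  shows "card {v\<in>V. sat V E (\<alpha>(y := v)) p} = card {w\<in>W. sat W F (\<beta>(y := w)) p}"
  using simple_graph_finite[OF assms(1)] simple_graph_finite[OF assms(2)]
    assms(3)[unfolded eb_vertex_colors_def]
  by (rule card_eq_if_image_mset_eq) (auto intro!: IH simp: eb_agree_def assms(4))

lemma card_sat_upd_eq_vertex_guard: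
  assumes sgE: "simple_graph V E" and sgF: "simple_graph W F"
    and "cfoc p" "fv p = {x, y}" "x \<noteq> y"
    and "eb_vertex_color (Suc m) E (\<alpha> x) = eb_vertex_color (Suc m) F (\<beta> x)"
    and IH: "\<And>\<alpha>' \<beta>'. eb_agree m E F \<alpha>' \<beta>' (fv p) \<Longrightarrow> sat V E \<alpha>' p \<longleftrightarrow> sat W F \<beta>' p"
  shows "card {v\<in>V. sat V E (\<alpha>(y := v)) p} = card {w\<in>W. sat W F (\<beta>(y := w)) p}"
proof -
  have restrict_E: "{v\<in>V. sat V E (\<alpha>(y := v)) p} = {v\<in>nbhd E (\<alpha> x). sat V E (\<alpha>(y := v)) p}"
    using sat_imp_edge[OF sgE \<open>cfoc p\<close>, of "\<alpha>(y := _)" x y] assms(4,5)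
      simple_graph_nbhd_subset[OF sgE] by (auto simp: nbhd_def)
  have restrict_F: "{w\<in>W. sat W F (\<beta>(y := w)) p} = {w\<in>nbhd F (\<beta> x). sat W F (\<beta>(y := w)) p}"
    using sat_imp_edge[OF sgF \<open>cfoc p\<close>, of "\<beta>(y := _)" x y] assms(4,5)
      simple_graph_nbhd_subset[OF sgF] by (auto simp: nbhd_def)
  show ?thesis
    unfolding restrict_E restrict_F
  proof (rule card_eq_if_image_mset_eq)
    show "image_mset (eb (Suc m) E (\<alpha> x)) (mset_set (nbhd E (\<alpha> x)))
        = image_mset (eb (Suc m) F (\<beta> x)) (mset_set (nbhd F (\<beta> x)))"
      using assms(6) by (simp add: eb_vertex_color_def)
    fix v w
    assume "v \<in> nbhd E (\<alpha> x)" "w \<in> nbhd F (\<beta> x)"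
      and "eb (Suc m) E (\<alpha> x) v = eb (Suc m) F (\<beta> x) w"
    then have "eb_agree m E F (\<alpha>(y := v)) (\<beta>(y := w)) {x, y}"
      using eb_agree_edge[OF sgE sgF \<open>x \<noteq> y\<close>, of "\<alpha>(y := v)" "\<beta>(y := w)"] \<open>x \<noteq> y\<close>
      by (simp add: nbhd_def)
    then show "sat V E (\<alpha>(y := v)) p \<longleftrightarrow> sat W F (\<beta>(y := w)) p"
      using IH assms(4) by simp
  qed (auto intro: simple_graph_finite_nbhd[OF sgE] simple_graph_finite_nbhd[OF sgF])
qed

lemma card_sat_upd_eq_edge_guard:
  assumes sgE: "simple_graph V E" and sgF: "simple_graph W F"
    and "cfoc p" "fv p = {x, z, y}" "distinct [x, z, y]"
    and "E (\<alpha> x) (\<alpha> z)" "F (\<beta> x) (\<beta> z)"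
    and xz: "eb (Suc (Suc m)) E (\<alpha> x) (\<alpha> z) = eb (Suc (Suc m)) F (\<beta> x) (\<beta> z)"
    and IH: "\<And>\<alpha>' \<beta>'. eb_agree m E F \<alpha>' \<beta>' (fv p) \<Longrightarrow> sat V E \<alpha>' p \<longleftrightarrow> sat W F \<beta>' p"
  shows "card {v\<in>V. sat V E (\<alpha>(y := v)) p} = card {w\<in>W. sat W F (\<beta>(y := w)) p}"
proof -
  let ?N = "nbhd E (\<alpha> x) \<inter> nbhd E (\<alpha> z)" and ?N' = "nbhd F (\<beta> x) \<inter> nbhd F (\<beta> z)"
  have "E (\<alpha> x) v \<and> E (\<alpha> z) v" if "sat V E (\<alpha>(y := v)) p" for v
    using sat_imp_edge[OF sgE \<open>cfoc p\<close> that, of x y] sat_imp_edge[OF sgE \<open>cfoc p\<close> that, of z y]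
      assms(4,5) by auto
  then have restrict_E: "{v\<in>V. sat V E (\<alpha>(y := v)) p} = {v\<in>?N. sat V E (\<alpha>(y := v)) p}"
    using simple_graph_edge_in[OF sgE] by (auto simp: nbhd_def)
  have "F (\<beta> x) w \<and> F (\<beta> z) w" if "sat W F (\<beta>(y := w)) p" for w
    using sat_imp_edge[OF sgF \<open>cfoc p\<close> that, of x y] sat_imp_edge[OF sgF \<open>cfoc p\<close> that, of z y]
      assms(4,5) by auto
  then have restrict_F: "{w\<in>W. sat W F (\<beta>(y := w)) p} = {w\<in>?N'. sat W F (\<beta>(y := w)) p}"
    using simple_graph_edge_in[OF sgF] by (auto simp: nbhd_def)
  show ?thesis
    unfolding restrict_E restrict_F
  proof (rule card_eq_if_image_mset_eq)
    show "image_mset (\<lambda>v. (eb (Suc m) E (\<alpha> x) v, eb (Suc m) E (\<alpha> z) v)) (mset_set ?N)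
        = image_mset (\<lambda>w. (eb (Suc m) F (\<beta> x) w, eb (Suc m) F (\<beta> z) w)) (mset_set ?N')"
      using xz by (simp add: eb_Suc_eq_iff eb_triangle_colors_def)
    fix v w
    assume "v \<in> ?N" "w \<in> ?N'"
      and "(eb (Suc m) E (\<alpha> x) v, eb (Suc m) E (\<alpha> z) v)
        = (eb (Suc m) F (\<beta> x) w, eb (Suc m) F (\<beta> z) w)"
    then have "eb_agree m E F (\<alpha>(y := v)) (\<beta>(y := w)) {x, z, y}"
      using eb_agree_edge[OF sgE sgF, of x y "\<alpha>(y := v)" "\<beta>(y := w)"]
        eb_agree_edge[OF sgE sgF, of z y "\<alpha>(y := v)" "\<beta>(y := w)"]
        eb_agree_edge[OF sgE sgF, of x z "\<alpha>(y := v)" "\<beta>(y := w)"]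
        assms(5-7) xz[unfolded eb_Suc_eq_iff[of "Suc m"]]
      by (intro eb_agree_triangle) (auto simp: nbhd_def)
    then show "sat V E (\<alpha>(y := v)) p \<longleftrightarrow> sat W F (\<beta>(y := w)) p"
      using IH assms(4) by simp
  qed (auto intro: simple_graph_finite_nbhd[OF sgE] simple_graph_finite_nbhd[OF sgF])
qed

lemma card_sat_upd_eq:
  assumes sgE: "simple_graph V E" and sgF: "simple_graph W F"
    and colors: "eb_vertex_colors m V E = eb_vertex_colors m W F"
    and "cfoc p" "distinct xs" "length xs \<le> 2" "y \<notin> set xs" "fv p = insert y (set xs)"
    and agree: "eb_agree (Suc (Suc m)) E F \<alpha> \<beta> (set xs)" and clique: "clique_holds E \<alpha> xs"
    and IH: "\<And>\<alpha>' \<beta>'. eb_agree m E F \<alpha>' \<beta>' (fv p) \<Longrightarrow> sat V E \<alpha>' p \<longleftrightarrow> sat W F \<beta>' p"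
  shows "card {v\<in>V. sat V E (\<alpha>(y := v)) p} = card {w\<in>W. sat W F (\<beta>(y := w)) p}"
proof -
  consider "xs = []" | x where "xs = [x]" | x z where "xs = [x, z]"
    using \<open>length xs \<le> 2\<close> by (cases xs; cases "tl xs") auto
  then show ?thesis
  proof cases
    case 1
    then show ?thesis
      using assms(8) by (intro card_sat_upd_eq_unguarded[OF sgE sgF colors _ IH]) simp
  next
    case (2 x)
    then have "eb_vertex_color (Suc m) E (\<alpha> x) = eb_vertex_color (Suc m) F (\<beta> x)"
      using agree by (auto simp: eb_agree_def intro: eb_vertex_color_eq_Suc_imp)
    then show ?thesis
      using 2 assms(7,8)
      by (intro card_sat_upd_eq_vertex_guard[OF sgE sgF \<open>cfoc p\<close> _ _ _ IH]) auto
  next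
    case (3 x z)
    then have "E (\<alpha> x) (\<alpha> z)"
      using clique by simp
    moreover from calculation have "F (\<beta> x) (\<beta> z)"
      and "eb (Suc (Suc m)) E (\<alpha> x) (\<alpha> z) = eb (Suc (Suc m)) F (\<beta> x) (\<beta> z)"
      using agree 3 assms(5) by (auto simp: eb_agree_def)
    ultimately show ?thesis
      using 3 assms(5,7,8)
      by (intro card_sat_upd_eq_edge_guard[OF sgE sgF \<open>cfoc p\<close> _ _ _ _ _ IH]) auto
  qed
qed

fun qdepth :: "cfm \<Rightarrow> nat" where
  "qdepth (Clique xs) = 0"
| "qdepth (CNeg xs p) = qdepth p"
| "qdepth (CConj zs p q) = max (qdepth p) (qdepth q)"
| "qdepth (CDisj zs p q) = max (qdepth p) (qdepth q)"
| "qdepth (CEx xs k y p) = Suc (qdepth p)"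

text \<open>Each quantifier costs two refinement rounds: one to pass from the colour of the guarding
  vertex or edge to the colours of the edges reaching the new vertex, and one more to see the
  vertex colour of the new vertex.\<close>

lemma sat_iff_if_eb_agree:
  assumes sgE: "simple_graph V E" and sgF: "simple_graph W F"
    and colors: "\<And>m. eb_vertex_colors m V E = eb_vertex_colors m W F"
  shows "cfoc p \<Longrightarrow> finite X \<Longrightarrow> card X \<le> 3 \<Longrightarrow> vars p \<subseteq> X \<Longrightarrow> 2 * qdepth p \<le> l \<Longrightarrow>
    eb_agree l E F \<alpha> \<beta> (fv p) \<Longrightarrow> sat V E \<alpha> p \<longleftrightarrow> sat W F \<beta> p"
proof (induction p arbitrary: l \<alpha> \<beta> rule: cfoc.induct)
  case (ex p xs y k)
  obtain m where l: "l = Suc (Suc m)" and depth: "2 * qdepth p \<le> m"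
    using ex.prems(4) by (cases l; cases "l - 1") auto
  have IH: "sat V E \<alpha>' p \<longleftrightarrow> sat W F \<beta>' p" if "eb_agree m E F \<alpha>' \<beta>' (fv p)" for \<alpha>' \<beta>'
    using ex.IH[OF ex.prems(1,2) _ depth that] ex.prems(3) by simp
  have agree: "eb_agree (Suc (Suc m)) E F \<alpha> \<beta> (set xs)"
    using ex.prems(5) ex.hyps l by simp
  have "insert y (set xs) \<subseteq> X"
    using ex.prems(3) ex.hyps(4) fv_subset_vars[of p] by auto
  then have "card (insert y (set xs)) \<le> 3"
    using ex.prems(1,2) by (meson card_mono order_trans)
  then have "length xs \<le> 2"
    using ex.hyps(2,3) by (simp add: distinct_card)
  then have "clique_holds E \<alpha> xs \<Longrightarrow>
      card {v\<in>V. sat V E (\<alpha>(y := v)) p} = card {w\<in>W. sat W F (\<beta>(y := w)) p}"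
    using card_sat_upd_eq[OF sgE sgF colors ex.hyps(1,2) _ ex.hyps(3,4) agree _ IH] by blast
  then show ?case
    using eb_agree_clique_holds[OF agree ex.hyps(2)] by auto
next
  case (conj p q zs)
  have "eb_agree l E F \<alpha> \<beta> (fv p)" "eb_agree l E F \<alpha> \<beta> (fv q)" "eb_agree l E F \<alpha> \<beta> (set zs)"
    using conj.prems(5) conj.hyps(4) by (auto elim: eb_agree_subset)
  moreover have "2 * qdepth p \<le> l" "2 * qdepth q \<le> l"
    using conj.prems(4) by auto
  ultimately show ?case
    using conj.IH[OF conj.prems(1,2)] conj.prems(3,4) conj.hyps(3)
    by (simp add: eb_agree_clique_holds)
next
  case (disj p q zs)
  have "eb_agree l E F \<alpha> \<beta> (fv p)" "eb_agree l E F \<alpha> \<beta> (fv q)" "eb_agree l E F \<alpha> \<beta> (set zs)"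
    using disj.prems(5) disj.hyps(4) by (auto elim: eb_agree_subset)
  moreover have "2 * qdepth p \<le> l" "2 * qdepth q \<le> l"
    using disj.prems(4) by auto
  ultimately show ?case
    using disj.IH[OF disj.prems(1,2)] disj.prems(3,4) disj.hyps(3)
    by (simp add: eb_agree_clique_holds)
qed (auto simp: eb_agree_clique_holds)

lemma sat_iff_if_eb_vertex_colors_eq:
  assumes "simple_graph V E" "simple_graph W F"
    and "\<And>m. eb_vertex_colors m V E = eb_vertex_colors m W F" "cfoc3_sentence p"
  shows "sat V E \<alpha> p \<longleftrightarrow> sat W F \<beta> p"
  using sat_iff_if_eb_agree[OF assms(1-3), of p "vars p" "2 * qdepth p"] assms(4)
  by (simp add: cfoc3_sentence_def eb_agree_def)

lemma eb_distinguishable_if_cfoc3_distinguishable: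
  assumes "simple_graph V E" "simple_graph W F" "cfoc3_distinguishable V E W F"
  shows "eb_distinguishable V E W F"
proof (rule ccontr)
  assume "\<not> eb_distinguishable V E W F"
  then have "eb_vertex_colors m V E = eb_vertex_colors m W F" for m
    using eb_vertex_colors_eq_if_eb_colors_eq[OF assms(1,2)] by (auto simp: eb_distinguishable_def)
  moreover obtain p \<beta> where "cfoc3_sentence p" "models V E p" "\<not> sat W F \<beta> p"
    using assms(3) by (auto simp: cfoc3_distinguishable_def models_def)
  ultimately show False
    using sat_iff_if_eb_vertex_colors_eq[OF assms(1,2)] by (metis models_def)
qed

theorem mainTheorem5:
  fixes V :: "'a set" and E :: "'a \<Rightarrow> 'a \<Rightarrow> bool"
    and W :: "'b set" and F :: "'b \<Rightarrow> 'b \<Rightarrow> bool"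
  assumes "simple_graph V E" and "simple_graph W F"
  shows "eb_distinguishable V E W F \<longleftrightarrow> cfoc3_distinguishable V E W F"
  using cfoc3_distinguishable_if_eb_distinguishable[OF assms]
    eb_distinguishable_if_cfoc3_distinguishable[OF assms] by blast

end
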